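(* Let $N$ be a finite set with $|N|\ge2$. Under the correspondence between SE faces of $P_N$ and faces of $C_N$ (the SE face $\{\eta\in P_N:\langle o,\eta\rangle=u\}$ with $o$ an SE objective and $\langle o,\eta\rangle\le u$ valid on $P_N$ corresponds to the face $\{c\in C_N:\langle\tau_o,c\rangle=u\}$), the SE facets of $P_N$ correspond exactly to those facets of $C_N$ that contain the 1-imset (the all-ones vector in $\mathbb{R}^{\mathcal{S}}$). None of these facets of $C_N$ contains the 0-imset (the zero vector in $\mathbb{R}^{\mathcal{S}}$).
   Context: $\mathrm{DAG}(N)$ is the set of acyclic directed graphs over $N$; $\mathrm{pa}_G(a)$ is the parent set of $a$ in $G$; $G\sim H$ (Markov equivalence) means same adjacencies and same immoralities. $\Upsilon=\{(a|B): a\in N,\ \emptyset\neq B\subseteq N\setminus\{a\}\}$; $\eta_G\in\mathbb{R}^{\Upsilon}$ has $\eta_G(a|B)=1$ if $B=\mathrm{pa}_G(a)$, else $0$; $P_N=\mathrm{conv}\{\eta_G:G\in\mathrm{DAG}(N)\}$. $\mathcal{S}=\{S\subseteq N:|S|\ge2\}$; $c_\eta(S)=\sum_{a\in S}\sum_{B:\,S\setminus\{a\}\subseteq B\subseteq N\setminus\{a\}}\eta(a|B)$; $c_G=c_{\eta_G}$; $C_N=\mathrm{conv}\{c_G:G\in\mathrm{DAG}(N)\}$. (The 1-imset is $c_H$ for any full graph $H$, the 0-imset is $c_G$ for the empty graph.) $o$ is an SE objective if $\langle o,\eta_G\rangle=\langle o,\eta_H\rangle$ whenever $G\sim H$; an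 SE face/facet of $P_N$ is a face/facet of the form $\{v\in P_N:\langle o,v\rangle=u\}$ with $o$ SE and $\langle o,v\rangle\le u$ valid on $P_N$. For SE $o$, $\tau_o(T)=\sum_{\emptyset\neq K\subseteq T\setminus\{b\}}(-1)^{|T\setminus\{b\}|-|K|}o(b|K)$ for any $b\in T$ (independent of $b$), with $o(b|\emptyset)=0$; then $\langle o,\eta\rangle=\langle\tau_o,c_\eta\rangle$ for all $\eta$. *)

theory Defs
  imports "HOL-Analysis.Analysis"
begin

text \<open>The ground set N is the universe of a finite type 'n.
  A directed graph over N is an edge relation E; (b,a) in E means b -> a.
  Vectors in R^Upsilon are represented in the ambient space real^('n * 'n set),
  with all coordinates outside Upsilon equal to zero; vectors in R^S are
  represented in real^('n set) with coordinates of sets of size < 2 equal to zero.\<close>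

definition is_dag :: "('n \<times> 'n) set \<Rightarrow> bool" where
  "is_dag E \<longleftrightarrow> acyclic E"

definition pa :: "('n \<times> 'n) set \<Rightarrow> 'n \<Rightarrow> 'n set" where
  "pa E a = {b. (b, a) \<in> E}"

definition adj :: "('n \<times> 'n) set \<Rightarrow> 'n \<Rightarrow> 'n \<Rightarrow> bool" where
  "adj E a b \<longleftrightarrow> (a, b) \<in> E \<or> (b, a) \<in> E"

definition immoralities :: "('n \<times> 'n) set \<Rightarrow> ('n \<times> 'n \<times> 'n) set" where
  "immoralities E = {(a, c, b). (a, c) \<in> E \<and> (b, c) \<in> E \<and> a \<noteq> b \<and> \<not> adj E a b}"

definition markov_equiv :: "('n \<times> 'n) set \<Rightarrow> ('n \<times> 'n) set \<Rightarrow> bool" where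
  "markov_equiv G H \<longleftrightarrow> (\<forall>a b. adj G a b \<longleftrightarrow> adj H a b) \<and> immoralities G = immoralities H"

definition in_Upsilon :: "'n \<times> 'n set \<Rightarrow> bool" where
  "in_Upsilon p \<longleftrightarrow> snd p \<noteq> {} \<and> fst p \<notin> snd p"

definition eta :: "('n::finite \<times> 'n) set \<Rightarrow> real ^ ('n \<times> 'n set)" where
  "eta E = (\<chi> p. if in_Upsilon p \<and> snd p = pa E (fst p) then 1 else 0)"

definition P_N :: "(real ^ ('n::finite \<times> 'n set)) set" where
  "P_N = convex hull (eta ` {E. is_dag E})"

definition cvec :: "real ^ ('n::finite \<times> 'n set) \<Rightarrow> real ^ ('n set)" where
  "cvec v = (\<chi> S. if 2 \<le> card S then
      (\<Sum>a\<in>S. \<Sum>B\<in>{B. S - {a} \<subseteq> B \<and> a \<notin> B}. v $ (a, B)) else 0)"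

definition C_N :: "(real ^ ('n::finite set)) set" where
  "C_N = convex hull ((\<lambda>E. cvec (eta E)) ` {E :: ('n \<times> 'n) set. is_dag E})"

definition se_objective :: "real ^ ('n::finite \<times> 'n set) \<Rightarrow> bool" where
  "se_objective ob \<longleftrightarrow> (\<forall>p. \<not> in_Upsilon p \<longrightarrow> ob $ p = 0) \<and>
     (\<forall>G H. is_dag G \<and> is_dag H \<and> markov_equiv G H \<longrightarrow> ob \<bullet> eta G = ob \<bullet> eta H)"

text \<open>tau_o(T), computed with the choice b = (SOME b. b in T) (independent of b for SE o).\<close>
definition tau :: "real ^ ('n::finite \<times> 'n set) \<Rightarrow> real ^ ('n set)" where
  "tau ob = (\<chi> T. if 2 \<le> card T then
      (let b = (SOME b. b \<in> T) in
        \<Sum>K\<in>{K. K \<noteq> {} \<and> K \<subseteq> T - {b}}. (-1) ^ (card (T - {b}) - card K) * ob $ (b, K))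
      else 0)"

definition one_imset :: "real ^ ('n::finite set)" where
  "one_imset = (\<chi> S. if 2 \<le> card S then 1 else 0)"

end

theory Submission
  imports Defs
begin

text \<open>The linear map \<open>cvec\<close> sends \<open>P_N\<close> onto \<open>C_N\<close>, and for an SE objective \<open>o\<close>
  Moebius inversion gives \<open>\<langle>tau o, cvec v\<rangle> = \<langle>o, v\<rangle>\<close>; the choice of base point in
  \<open>tau\<close> is irrelevant because two complete DAGs differing by an adjacent swap are Markov
  equivalent. So SE faces of \<open>P_N\<close> map onto faces of \<open>C_N\<close>. On the span of \<open>P_N\<close> the
  kernel of \<open>cvec\<close> is spanned by differences of complete DAGs, so any face containing
  complete DAGs (for an SE face: one, hence all) loses exactly as many dimensions as \<open>P_N\<close>
  itself. An SE facet contains a complete DAG, built vertex by vertex by exchanging parent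
  sets inside the facet; a face of \<open>C_N\<close> through the 1-imset pulls back to a face through
  a complete DAG. Hence facets correspond to facets through the 1-imset. Every facet of
  \<open>C_N\<close> pulls back to an SE objective, and if it contained both the 1-imset and \<open>0 = cvec (eta {})\<close>,
  exchanging parent sets with the empty graph would put every unit vector of \<open>\<real>^\<Upsilon>\<close> into
  the corresponding SE facet, so the objective would vanish.\<close>

section \<open>Parent-set vectors and complete DAGs\<close>

definition parent_vec :: "'n::finite \<Rightarrow> 'n set \<Rightarrow> real ^ ('n \<times> 'n set)" where
  "parent_vec a B = (if B \<noteq> {} \<and> a \<notin> B then axis (a, B) 1 else 0)"

lemma eta_eq_sum_parent_vec: "eta E = (\<Sum>a\<in>UNIV. parent_vec a (pa E a))"
proof -
  have "(\<Sum>x\<in>UNIV. parent_vec x (pa E x)) $ (a, B) = eta E $ (a, B)" for a B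
  proof -
    have "(\<Sum>x\<in>UNIV. parent_vec x (pa E x)) $ (a, B)
        = (\<Sum>x\<in>UNIV. if x = a then parent_vec a (pa E a) $ (a, B) else 0)"
      unfolding sum_component by (rule sum.cong) (auto simp: parent_vec_def axis_def)
    also have "\<dots> = eta E $ (a, B)"
      by (auto simp: parent_vec_def eta_def axis_def in_Upsilon_def)
    finally show ?thesis .
  qed
  then show ?thesis by (simp add: vec_eq_iff)
qed

lemma eta_component: "eta E $ (a, B) = (if B \<noteq> {} \<and> a \<notin> B \<and> pa E a = B then 1 else 0)"
  by (auto simp: eta_def in_Upsilon_def)

lemma eta_cong_pa: "(\<And>w. pa G w = pa H w) \<Longrightarrow> eta G = eta H"
  by (simp add: eta_eq_sum_parent_vec)

definition Upsilon_space :: "(real ^ ('n::finite \<times> 'n set)) set" where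
  "Upsilon_space = {v. \<forall>p. \<not> in_Upsilon p \<longrightarrow> v $ p = 0}"

lemma subspace_Upsilon_space: "subspace Upsilon_space"
  by (auto simp: subspace_def Upsilon_space_def)

lemma se_objective_imp_Upsilon_space: "se_objective ob \<Longrightarrow> ob \<in> Upsilon_space"
  by (simp add: se_objective_def Upsilon_space_def)

lemma parent_vec_in_Upsilon_space: "parent_vec a B \<in> Upsilon_space"
  by (auto simp: parent_vec_def Upsilon_space_def axis_def in_Upsilon_def)

lemma eta_in_Upsilon_space: "eta E \<in> Upsilon_space"
  unfolding eta_eq_sum_parent_vec
  by (intro subspace_sum subspace_Upsilon_space parent_vec_in_Upsilon_space)

lemma inner_parent_vec: "ob \<in> Upsilon_space \<Longrightarrow> ob \<bullet> parent_vec a B = ob $ (a, B)"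
  by (auto simp: parent_vec_def Upsilon_space_def in_Upsilon_def inner_axis)

lemma acyclic_if_rank_increasing:
  assumes "\<And>x y. (x, y) \<in> E \<Longrightarrow> (t x :: nat) < t y"
  shows "acyclic E"
proof (rule acyclic_subset)
  have "trans {(x, y). t x < t y}" by (auto simp: trans_def)
  then show "acyclic {(x, y). t x < t y}" by (auto simp: acyclic_def)
qed (use assms in auto)

lemma is_dag_rank:
  assumes "is_dag G"
  obtains t :: "'n::finite \<Rightarrow> nat" where "\<And>y w. (y, w) \<in> G \<Longrightarrow> t y < t w"
proof
  define t where "t w = card {z. (z, w) \<in> G\<^sup>+}" for w
  fix y w assume yw: "(y, w) \<in> G"
  have "{z. (z, y) \<in> G\<^sup>+} \<subset> {z. (z, w) \<in> G\<^sup>+}"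
    using yw assms by (auto simp: is_dag_def acyclic_def intro: trancl_into_trancl)
  then show "t y < t w" unfolding t_def by (simp add: psubset_card_mono)
qed

lemma is_dag_irrefl: "is_dag E \<Longrightarrow> (a, a) \<notin> E"
  unfolding is_dag_def acyclic_def by auto

lemma is_dag_asym: "is_dag E \<Longrightarrow> (a, b) \<in> E \<Longrightarrow> (b, a) \<notin> E"
  unfolding is_dag_def acyclic_def by (meson trancl.simps)

lemma is_dag_no_3cycle: "is_dag E \<Longrightarrow> (a, b) \<in> E \<Longrightarrow> (b, c) \<in> E \<Longrightarrow> (c, a) \<notin> E"
  unfolding is_dag_def acyclic_def by (meson trancl.simps)

lemma is_dag_sink:
  fixes E :: "('n::finite \<times> 'n) set"
  assumes "is_dag E" "A \<noteq> {}"
  obtains x where "x \<in> A" "\<And>y. y \<in> A \<Longrightarrow> (x, y) \<notin> E"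
proof -
  have "wf (E\<inverse>)" using assms(1) unfolding is_dag_def
    by (intro finite_acyclic_wf_converse) auto
  then show ?thesis using assms(2) that unfolding wf_eq_minimal by blast
qed

lemma obtain_bounded_injection:
  obtains r :: "'a::finite \<Rightarrow> nat" where "inj r" "\<And>x. r x < CARD('a)"
proof -
  obtain r :: "'a \<Rightarrow> nat" where r: "bij_betw r UNIV {0..<CARD('a)}"
    using ex_bij_betw_finite_nat[of "UNIV :: 'a set"] by auto
  show ?thesis using bij_betwE[OF r] bij_betw_imp_inj_on[OF r] by (intro that) auto
qed

definition order_dag :: "'n set \<Rightarrow> ('n \<Rightarrow> nat) \<Rightarrow> ('n \<times> 'n) set" where
  "order_dag R r = {(x, y). x \<in> R \<and> y \<in> R \<and> r x < r y}"

lemma pa_order_dag: "pa (order_dag R r) y = (if y \<in> R then {x\<in>R. r x < r y} else {})"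
  by (auto simp: pa_def order_dag_def)

lemma is_dag_order_dag: "is_dag (order_dag R r)"
  unfolding is_dag_def by (rule acyclic_if_rank_increasing[of _ r]) (auto simp: order_dag_def)

lemma markov_equiv_order_dag:
  assumes "inj_on r1 R" "inj_on r2 R"
  shows "markov_equiv (order_dag R r1) (order_dag R r2)"
proof -
  have adj: "adj (order_dag R r) x y \<longleftrightarrow> x \<in> R \<and> y \<in> R \<and> x \<noteq> y" if "inj_on r R" for r x y
    using that by (auto simp: adj_def order_dag_def inj_on_def) (metis linorder_neqE_nat)
  have "immoralities (order_dag R r) = {}" if "inj_on r R" for r
    using adj[OF that] by (auto simp: immoralities_def order_dag_def)
  then show ?thesis using adj assms by (simp add: markov_equiv_def)
qed

lemma se_objective_order_dag:
  assumes "se_objective ob" "inj_on r1 R" "inj_on r2 R"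
  shows "ob \<bullet> eta (order_dag R r1) = ob \<bullet> eta (order_dag R r2)"
  using assms is_dag_order_dag markov_equiv_order_dag unfolding se_objective_def by blast

lemma eta_diff_eq_sum_local:
  assumes "\<And>w. w \<notin> A \<Longrightarrow> pa G w = pa H w"
  shows "eta G - eta H = (\<Sum>w\<in>A. parent_vec w (pa G w) - parent_vec w (pa H w))"
  unfolding eta_eq_sum_parent_vec sum_subtractf[symmetric]
  by (rule sum.mono_neutral_right) (use assms in auto)

lemma eta_order_dag_swap:
  fixes a h :: "'n::finite"
  assumes "a \<noteq> h" "a \<notin> B" "h \<notin> B"
  obtains r1 r2 where "inj r1" "inj r2"
    "eta (order_dag UNIV r1) - eta (order_dag UNIV r2)
       = parent_vec a B + parent_vec h (insert a B) - parent_vec h B - parent_vec a (insert h B)"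
proof -
  obtain r0 :: "'n \<Rightarrow> nat" where r0: "inj r0" "\<And>x. r0 x < CARD('n)"
    using obtain_bounded_injection by metis
  define N where "N = CARD('n)"
  have r0_lt: "r0 x < N" for x
    using r0(2)[of x] by (auto simp: N_def)
  define rank where "rank u v x = (if x \<in> B then r0 x else if x = u then N
    else if x = v then Suc N else Suc (Suc N) + r0 x)" for u v x
  have inj: "inj (rank u v)" if "u \<noteq> v" for u v
  proof (rule injI)
    fix x y assume "rank u v x = rank u v y"
    then show "x = y" using r0(1) r0_lt[of x] r0_lt[of y] that
      unfolding rank_def by (auto simp: inj_eq split: if_splits)
  qed
  have pa_u: "pa (order_dag UNIV (rank u v)) u = B"
    and pa_v: "pa (order_dag UNIV (rank u v)) v = insert u B" if "u \<noteq> v" "u \<notin> B" "v \<notin> B" for u v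
    using that r0_lt unfolding pa_order_dag rank_def by (auto simp: less_Suc_eq)
  have pa_other: "pa (order_dag UNIV (rank a h)) w = pa (order_dag UNIV (rank h a)) w"
    if "w \<notin> {a, h}" for w
  proof -
    have "rank a h x < rank a h w \<longleftrightarrow> rank h a x < rank h a w" for x
      using that r0_lt[of w] unfolding rank_def by auto
    then show ?thesis by (simp add: pa_order_dag)
  qed
  have "eta (order_dag UNIV (rank a h)) - eta (order_dag UNIV (rank h a))
      = (\<Sum>w\<in>{a, h}. parent_vec w (pa (order_dag UNIV (rank a h)) w)
                      - parent_vec w (pa (order_dag UNIV (rank h a)) w))"
    by (rule eta_diff_eq_sum_local) (rule pa_other)
  also have "\<dots> = (parent_vec a B - parent_vec a (insert h B)) + (parent_vec h (insert a B) - parent_vec h B)"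
    using assms by (simp add: pa_u pa_v)
  finally have "eta (order_dag UNIV (rank a h)) - eta (order_dag UNIV (rank h a))
      = parent_vec a B + parent_vec h (insert a B) - parent_vec h B - parent_vec a (insert h B)"
    by (simp add: algebra_simps)
  with assms inj show ?thesis by (intro that[of "rank a h" "rank h a"]) auto
qed

lemma se_objective_exchange:
  assumes se: "se_objective ob" and "b \<noteq> b'" "b \<notin> K" "b' \<notin> K"
  shows "ob $ (b', K) + ob $ (b, insert b' K) = ob $ (b, K) + ob $ (b', insert b K)"
proof -
  obtain r1 r2 :: "'a \<Rightarrow> nat" where r: "inj r1" "inj r2"
    "eta (order_dag UNIV r1) - eta (order_dag UNIV r2)
       = parent_vec b' K + parent_vec b (insert b' K) - parent_vec b K - parent_vec b' (insert b K)"
    using eta_order_dag_swap[of b' b K] assms by metis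
  have "ob \<bullet> (eta (order_dag UNIV r1) - eta (order_dag UNIV r2)) = 0"
    using se_objective_order_dag[OF se r(1,2)] by (simp add: inner_diff_right)
  then show ?thesis
    unfolding r(3) using se_objective_imp_Upsilon_space[OF se]
    by (simp add: inner_diff_right inner_add_right inner_parent_vec)
qed

section \<open>The transform \<open>tau\<close> inverts the passage to standard imsets\<close>

lemma alternating_sum_Pow_insert:
  fixes f :: "'a set \<Rightarrow> real"
  assumes "finite R" "x \<notin> R"
  shows "(\<Sum>K\<in>Pow (insert x R). (-1) ^ (card (insert x R) - card K) * f K)
       = (\<Sum>K\<in>Pow R. (-1) ^ (card R - card K) * (f (insert x K) - f K))"
proof -
  have fin: "finite K" and card_le: "card K \<le> card R" if "K \<in> Pow R" for K
    using assms(1) that by (auto intro: finite_subset card_mono)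
  have "(\<Sum>K\<in>Pow (insert x R). (-1) ^ (card (insert x R) - card K) * f K)
     = (\<Sum>K\<in>Pow R. (-1) ^ (card (insert x R) - card K) * f K)
       + (\<Sum>K\<in>insert x ` Pow R. (-1) ^ (card (insert x R) - card K) * f K)"
    unfolding Pow_insert using assms by (intro sum.union_disjoint) auto
  also have "(\<Sum>K\<in>insert x ` Pow R. (-1) ^ (card (insert x R) - card K) * f K)
     = (\<Sum>K\<in>Pow R. (-1) ^ (card (insert x R) - card (insert x K)) * f (insert x K))"
    using assms(2) by (intro sum.reindex[unfolded comp_def]) (auto simp: inj_on_def)
  also have "\<dots> = (\<Sum>K\<in>Pow R. (-1) ^ (card R - card K) * f (insert x K))"
  proof (rule sum.cong[OF refl])
    fix K assume "K \<in> Pow R"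
    then have "x \<notin> K" "finite K" using assms fin by auto
    with assms show "(-1) ^ (card (insert x R) - card (insert x K)) * f (insert x K)
        = (-1) ^ (card R - card K) * f (insert x K)" by simp
  qed
  also have "(\<Sum>K\<in>Pow R. (-1) ^ (card (insert x R) - card K) * f K)
      = (\<Sum>K\<in>Pow R. - ((-1) ^ (card R - card K) * f K))"
    using assms card_le by (intro sum.cong) (auto simp: Suc_diff_le)
  finally show ?thesis by (simp add: sum_subtractf sum_negf algebra_simps)
qed

lemma alternating_sum_Pow:
  assumes "finite A"
  shows "(\<Sum>X\<in>Pow A. (-1) ^ (card A - card X) :: real) = (if A = {} then 1 else 0)"
proof (cases "A = {}")
  case False
  then obtain x R where A: "A = insert x R" "x \<notin> R" by (meson Set.set_insert ex_in_conv)
  then show ?thesis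
    using alternating_sum_Pow_insert[of R x "\<lambda>_. 1"] assms by simp
qed simp

lemma alternating_sum_interval:
  assumes "finite B" "K \<subseteq> B"
  shows "(\<Sum>J | K \<subseteq> J \<and> J \<subseteq> B. (-1) ^ (card J - card K) :: real) = (if K = B then 1 else 0)"
proof -
  have "(\<Sum>J | K \<subseteq> J \<and> J \<subseteq> B. (-1) ^ (card J - card K) :: real)
      = (\<Sum>X\<in>Pow (B - K). (-1) ^ (card (B - K) - card X))"
  proof (rule sum.reindex_bij_witness[of _ "\<lambda>X. B - X" "\<lambda>J. B - J"])
    fix J assume J: "J \<in> {J. K \<subseteq> J \<and> J \<subseteq> B}"
    then have "card (B - K) - card (B - J) = card J - card K"
      using assms card_mono[of J K] card_mono[of B J]
      by (auto simp: card_Diff_subset finite_subset)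
    then show "(-1) ^ (card (B - K) - card (B - J)) = ((-1) ^ (card J - card K) :: real)"
      by simp
  qed (use assms in auto)
  also have "\<dots> = (if K = B then 1 else 0)" using alternating_sum_Pow[of "B - K"] assms by auto
  finally show ?thesis .
qed

text \<open>\<open>tau ob $ T\<close> computed with an arbitrary base point \<open>b \<in> T\<close>; the term with
  \<open>K = {}\<close> may be included since \<open>ob $ (b, {}) = 0\<close>.\<close>
definition tau_at :: "real ^ ('n::finite \<times> 'n set) \<Rightarrow> 'n \<Rightarrow> 'n set \<Rightarrow> real" where
  "tau_at ob b T = (\<Sum>K\<in>Pow (T - {b}). (-1) ^ (card (T - {b}) - card K) * ob $ (b, K))"

lemma tau_at_independent:
  assumes se: "se_objective ob" and "b \<in> T" "b' \<in> T"
  shows "tau_at ob b T = tau_at ob b' T"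
proof (cases "b = b'")
  case False
  define R where "R = T - {b, b'}"
  have T: "T - {b} = insert b' R" "T - {b'} = insert b R" and "b \<notin> R" "b' \<notin> R"
    using assms False by (auto simp: R_def)
  have "tau_at ob b T = (\<Sum>K\<in>Pow R. (-1) ^ (card R - card K) * (ob $ (b, insert b' K) - ob $ (b, K)))"
    unfolding tau_at_def T using \<open>b' \<notin> R\<close> by (intro alternating_sum_Pow_insert) auto
  also have "\<dots> = (\<Sum>K\<in>Pow R. (-1) ^ (card R - card K) * (ob $ (b', insert b K) - ob $ (b', K)))"
  proof (rule sum.cong[OF refl])
    fix K assume "K \<in> Pow R"
    then have "b \<notin> K" "b' \<notin> K" using \<open>b \<notin> R\<close> \<open>b' \<notin> R\<close> by auto
    from se_objective_exchange[OF se False this] show "(-1) ^ (card R - card K) * (ob $ (b, insert b' K) - ob $ (b, K))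
        = (-1) ^ (card R - card K) * (ob $ (b', insert b K) - ob $ (b', K))" by simp
  qed
  also have "\<dots> = tau_at ob b' T"
    unfolding tau_at_def T using \<open>b \<notin> R\<close> by (intro alternating_sum_Pow_insert[symmetric]) auto
  finally show ?thesis .
qed simp

lemma tau_eq_tau_at:
  assumes se: "se_objective ob" and "2 \<le> card T" "b \<in> T"
  shows "tau ob $ T = tau_at ob b T"
proof -
  define b0 where "b0 = (SOME b. b \<in> T)"
  have b0: "b0 \<in> T" unfolding b0_def using assms(3) by (rule someI)
  have "ob $ (b0, {}) = 0"
    using se_objective_imp_Upsilon_space[OF se] by (simp add: Upsilon_space_def in_Upsilon_def)
  moreover have "Pow (T - {b0}) = insert {} {K. K \<noteq> {} \<and> K \<subseteq> T - {b0}}" by auto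
  ultimately have "tau ob $ T = tau_at ob b0 T"
    using assms(2) by (simp add: tau_def tau_at_def b0_def Let_def)
  also have "\<dots> = tau_at ob b T" by (rule tau_at_independent[OF se b0 assms(3)])
  finally show ?thesis .
qed

lemma card_ge_2_Diff_singleton_nonempty:
  assumes "2 \<le> card S"
  shows "S - {a} \<noteq> {}"
proof
  assume "S - {a} = {}"
  then have "card S \<le> card {a}" by (intro card_mono) auto
  with assms show False by simp
qed

lemma sets_above_eq_image_insert:
  assumes "a \<notin> (B :: 'n::finite set)"
  shows "{S. 2 \<le> card S \<and> a \<in> S \<and> S - {a} \<subseteq> B} = insert a ` (Pow B - {{}})"
proof (intro equalityI subsetI)
  fix S assume "S \<in> {S. 2 \<le> card S \<and> a \<in> S \<and> S - {a} \<subseteq> B}"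
  then show "S \<in> insert a ` (Pow B - {{}})"
    using card_ge_2_Diff_singleton_nonempty[of S a] by (intro image_eqI[of _ _ "S - {a}"]) auto
next
  fix S assume "S \<in> insert a ` (Pow B - {{}})"
  then obtain J where J: "S = insert a J" "J \<subseteq> B" "J \<noteq> {}" by auto
  moreover have "a \<notin> J" using J assms by auto
  ultimately have "2 \<le> card S" by (auto simp: Suc_le_eq card_gt_0_iff)
  with J show "S \<in> {S. 2 \<le> card S \<and> a \<in> S \<and> S - {a} \<subseteq> B}" by auto
qed

lemma sum_tau_eq_objective:
  assumes se: "se_objective ob" and a: "a \<notin> B"
  shows "(\<Sum>S | 2 \<le> card S \<and> a \<in> S \<and> S - {a} \<subseteq> B. tau ob $ S) = ob $ (a, B)"
proof -
  define f where "f K = ob $ (a, K)" for K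
  have f_empty: "f {} = 0"
    using se_objective_imp_Upsilon_space[OF se] by (simp add: Upsilon_space_def in_Upsilon_def f_def)
  have tau_insert: "tau ob $ insert a J = (\<Sum>K\<in>Pow J. (-1) ^ (card J - card K) * f K)"
    if "J \<in> Pow B - {{}}" for J
  proof -
    have "insert a J \<in> {S. 2 \<le> card S \<and> a \<in> S \<and> S - {a} \<subseteq> B}"
      using sets_above_eq_image_insert[OF a] that by blast
    then have "tau ob $ insert a J = tau_at ob a (insert a J)" by (intro tau_eq_tau_at[OF se]) auto
    moreover have "insert a J - {a} = J" using that a by auto
    ultimately show ?thesis by (simp add: tau_at_def f_def)
  qed
  have "(\<Sum>S | 2 \<le> card S \<and> a \<in> S \<and> S - {a} \<subseteq> B. tau ob $ S)
      = (\<Sum>J\<in>Pow B - {{}}. tau ob $ insert a J)"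
    unfolding sets_above_eq_image_insert[OF a] using a
    by (intro sum.reindex[unfolded comp_def]) (auto simp: inj_on_def)
  also have "\<dots> = (\<Sum>J\<in>Pow B. \<Sum>K\<in>Pow J. (-1) ^ (card J - card K) * f K)"
    using f_empty by (simp add: tau_insert sum_diff1)
  also have "\<dots> = (\<Sum>J\<in>Pow B. \<Sum>K | K \<in> Pow B \<and> K \<subseteq> J. (-1) ^ (card J - card K) * f K)"
    by (intro sum.cong refl) auto
  also have "\<dots> = (\<Sum>K\<in>Pow B. \<Sum>J | J \<in> Pow B \<and> K \<subseteq> J. (-1) ^ (card J - card K) * f K)"
    by (rule sum.swap_restrict) auto
  also have "\<dots> = (\<Sum>K\<in>Pow B. f K * (\<Sum>J | K \<subseteq> J \<and> J \<subseteq> B. (-1) ^ (card J - card K)))"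
    by (intro sum.cong refl) (auto simp: sum_distrib_left mult.commute intro!: sum.cong)
  also have "\<dots> = (\<Sum>K\<in>Pow B. if K = B then f K else 0)"
    by (intro sum.cong refl) (simp add: alternating_sum_interval)
  also have "\<dots> = f B" by simp
  finally show ?thesis by (simp add: f_def)
qed

lemma linear_cvec: "linear cvec"
  by (rule linearI) (simp_all add: cvec_def vec_eq_iff sum.distrib sum_distrib_left)

lemma cvec_axis:
  "cvec (axis (a, B) 1 :: real ^ ('n::finite \<times> 'n set)) $ S =
     (if 2 \<le> card S \<and> a \<in> S \<and> S - {a} \<subseteq> B \<and> a \<notin> B then 1 else 0)"
proof -
  have inner_sum: "(\<Sum>B' | S - {x} \<subseteq> B' \<and> x \<notin> B'. (axis (a, B) 1 :: real ^ ('n \<times> 'n set)) $ (x, B'))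
     = (if x = a \<and> S - {a} \<subseteq> B \<and> a \<notin> B then 1 else 0)" for x
    by (cases "x = a") (auto simp: axis_def)
  have "(\<Sum>x\<in>S. if x = a \<and> S - {a} \<subseteq> B \<and> a \<notin> B then 1 else 0 :: real)
     = (if a \<in> S \<and> S - {a} \<subseteq> B \<and> a \<notin> B then 1 else 0)"
  proof (cases "S - {a} \<subseteq> B \<and> a \<notin> B")
    case False
    show ?thesis by (subst sum.neutral) (use False in auto)
  qed simp
  then show ?thesis by (simp add: cvec_def inner_sum)
qed

lemma inner_cvec_axis:
  "t \<bullet> cvec (axis (a, B) 1 :: real ^ ('n::finite \<times> 'n set)) =
     (if a \<notin> B then (\<Sum>S | 2 \<le> card S \<and> a \<in> S \<and> S - {a} \<subseteq> B. t $ S) else 0)"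
  by (simp add: inner_vec_def cvec_axis if_distrib sum.If_cases cong: if_cong)

lemma inner_cvec_adjoint:
  assumes "\<And>p. ob $ p = t \<bullet> cvec (axis p 1 :: real ^ ('n::finite \<times> 'n set))"
  shows "ob \<bullet> v = t \<bullet> cvec v"
proof -
  have "t \<bullet> cvec v = t \<bullet> cvec (\<Sum>p\<in>UNIV. v $ p *\<^sub>R axis p 1)"
    using basis_expansion[of v] by (simp add: scalar_mult_eq_scaleR)
  also have "\<dots> = (\<Sum>p\<in>UNIV. v $ p * ob $ p)"
    by (simp add: linear_sum[OF linear_cvec] linear_scale[OF linear_cvec] inner_sum_right assms)
  finally show ?thesis by (simp add: inner_vec_def mult.commute)
qed

lemma inner_tau_cvec:
  assumes se: "se_objective ob"
  shows "tau ob \<bullet> cvec v = ob \<bullet> v"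
proof (rule inner_cvec_adjoint[symmetric])
  fix p :: "'a \<times> 'a set"
  obtain a B where p: "p = (a, B)" by (cases p)
  show "ob $ p = tau ob \<bullet> cvec (axis p 1)"
  proof (cases "a \<in> B")
    case True
    then show ?thesis using se_objective_imp_Upsilon_space[OF se]
      by (simp add: p inner_cvec_axis Upsilon_space_def in_Upsilon_def)
  qed (simp add: p inner_cvec_axis sum_tau_eq_objective[OF se])
qed

section \<open>Standard imsets of DAGs\<close>

lemma C_N_eq_image_cvec: "C_N = cvec ` P_N"
  unfolding C_N_def P_N_def convex_hull_linear_image[OF linear_cvec] image_image ..

lemma cvec_parent_vec:
  "cvec (parent_vec a B) $ S
     = (if 2 \<le> card S \<and> a \<in> S \<and> S - {a} \<subseteq> B \<and> B \<noteq> {} \<and> a \<notin> B then 1 else 0)"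
  by (simp add: parent_vec_def cvec_axis linear_0[OF linear_cvec])

lemma cvec_eta:
  assumes "is_dag E"
  shows "cvec (eta E) $ S = (if 2 \<le> card S \<and> (\<exists>a\<in>S. S - {a} \<subseteq> pa E a) then 1 else 0)"
proof -
  define P where
    "P a \<longleftrightarrow> 2 \<le> card S \<and> a \<in> S \<and> S - {a} \<subseteq> pa E a \<and> pa E a \<noteq> {} \<and> a \<notin> pa E a" for a
  have P_iff: "(\<exists>a. P a) \<longleftrightarrow> 2 \<le> card S \<and> (\<exists>a\<in>S. S - {a} \<subseteq> pa E a)"
  proof
    assume "2 \<le> card S \<and> (\<exists>a\<in>S. S - {a} \<subseteq> pa E a)"
    then obtain a where a: "2 \<le> card S" "a \<in> S" "S - {a} \<subseteq> pa E a" by blast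
    moreover have "pa E a \<noteq> {}" using a card_ge_2_Diff_singleton_nonempty[OF a(1), of a] by blast
    moreover have "a \<notin> pa E a" using is_dag_irrefl[OF assms] by (simp add: pa_def)
    ultimately show "\<exists>a. P a" by (auto simp: P_def)
  qed (auto simp: P_def)
  have P_unique: "x = a" if "P x" "P a" for x a
    using that is_dag_asym[OF assms] unfolding P_def pa_def by blast
  have "cvec (eta E) $ S = (\<Sum>a\<in>UNIV. cvec (parent_vec a (pa E a)) $ S)"
    by (simp add: eta_eq_sum_parent_vec linear_sum[OF linear_cvec])
  also have "\<dots> = (\<Sum>a\<in>UNIV. if P a then 1 else 0)"
    by (simp add: cvec_parent_vec P_def)
  also have "\<dots> = (if \<exists>a. P a then 1 else 0)"
  proof (cases "\<exists>a. P a")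
    case True
    then obtain a where "P a" by blast
    then have "(\<Sum>x\<in>UNIV. if P x then 1 else 0) = (\<Sum>x\<in>UNIV. if x = a then 1 else (0::real))"
      using P_unique by (intro sum.cong) auto
    with \<open>P a\<close> show ?thesis by auto
  qed simp
  finally show ?thesis by (simp add: P_iff)
qed

lemma cvec_eta_complete:
  assumes "inj r"
  shows "cvec (eta (order_dag UNIV r)) = one_imset"
proof -
  have "\<exists>a\<in>S. S - {a} \<subseteq> pa (order_dag UNIV r) a" if "2 \<le> card S" for S :: "'a set"
  proof -
    have "S \<noteq> {}" using that by auto
    then have "Max (r ` S) \<in> r ` S" by simp
    then obtain a where a: "a \<in> S" "r a = Max (r ` S)" by auto
    have "r x < r a" if "x \<in> S - {a}" for x
    proof -
      have "r x \<le> r a" using that a by simp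
      moreover have "r x \<noteq> r a" using that assms by (auto simp: inj_eq)
      ultimately show ?thesis by simp
    qed
    then show ?thesis using a(1) by (intro bexI[of _ a]) (auto simp: pa_order_dag)
  qed
  then show ?thesis using is_dag_order_dag[of UNIV r]
    by (auto simp: vec_eq_iff cvec_eta one_imset_def)
qed

text \<open>If \<open>a\<close> has no \<open>H\<close>-children in \<open>S\<close>, then \<open>S - {a} \<subseteq> pa H a\<close>; otherwise an \<open>H\<close>-sink
  among them covers \<open>S\<close>, since the immoralities of \<open>G\<close> and \<open>H\<close> agree.\<close>
lemma markov_equiv_parent_cover:
  fixes G H :: "('n::finite \<times> 'n) set"
  assumes G: "is_dag G" and H: "is_dag H" and m: "markov_equiv G H"
    and a: "a \<in> S" "S - {a} \<subseteq> pa G a"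
  shows "\<exists>x\<in>S. S - {x} \<subseteq> pa H x"
proof -
  have adj: "adj G x y \<longleftrightarrow> adj H x y" for x y using m by (simp add: markov_equiv_def)
  have imm: "immoralities G = immoralities H" using m by (simp add: markov_equiv_def)
  define D where "D = {d \<in> S - {a}. (a, d) \<in> H}"
  show ?thesis
  proof (cases "D = {}")
    case True
    have "S - {a} \<subseteq> pa H a"
    proof
      fix d assume d: "d \<in> S - {a}"
      then have "adj H d a" using a adj by (auto simp: adj_def pa_def)
      moreover have "(a, d) \<notin> H" using True d D_def by auto
      ultimately show "d \<in> pa H a" by (auto simp: adj_def pa_def)
    qed
    then show ?thesis using a by auto
  next
    case False
    obtain d where d: "d \<in> D" "\<And>y. y \<in> D \<Longrightarrow> (d, y) \<notin> H" using is_dag_sink[OF H False] by blast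
    have dS: "d \<in> S" "d \<noteq> a" "(a, d) \<in> H" using d D_def by auto
    have "y \<in> pa H d" if y: "y \<in> S - {d}" "y \<noteq> a" for y
    proof -
      have yG: "(y, a) \<in> G" "(d, a) \<in> G" using a y dS by (auto simp: pa_def)
      have "adj G y d"
      proof (rule ccontr)
        assume "\<not> adj G y d"
        then have "(y, a, d) \<in> immoralities G" using yG y by (simp add: immoralities_def)
        then have "(y, a, d) \<in> immoralities H" using imm by simp
        then show False using dS(3) is_dag_asym[OF H] by (auto simp: immoralities_def)
      qed
      then have "adj H y d" using adj by simp
      moreover have "(d, y) \<notin> H"
      proof
        assume dy: "(d, y) \<in> H"
        then have "(a, y) \<notin> H" using d y D_def by auto
        then have "(y, a) \<in> H" using yG adj by (auto simp: adj_def)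
        then show False using dy dS(3) is_dag_no_3cycle[OF H] by blast
      qed
      ultimately show ?thesis by (auto simp: adj_def pa_def)
    qed
    then have "S - {d} \<subseteq> pa H d" using dS by (auto simp: pa_def)
    then show ?thesis using dS by auto
  qed
qed

lemma markov_equiv_imp_cvec_eta_eq:
  assumes "is_dag G" "is_dag H" "markov_equiv G H"
  shows "cvec (eta G) = cvec (eta H)"
proof -
  have "markov_equiv H G" using assms(3) by (auto simp: markov_equiv_def)
  then have "(\<exists>a\<in>S. S - {a} \<subseteq> pa G a) \<longleftrightarrow> (\<exists>a\<in>S. S - {a} \<subseteq> pa H a)" for S
    using markov_equiv_parent_cover assms by blast
  then show ?thesis by (simp add: vec_eq_iff cvec_eta assms)
qed

section \<open>Comparing affine dimensions\<close>

lemma dim_eq_dim_image_add_dim: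
  fixes f :: "'a::euclidean_space \<Rightarrow> 'b::euclidean_space"
  assumes f: "linear f" and D: "subspace D" and K: "subspace K" "K \<subseteq> D"
    and D_span: "D \<subseteq> span (K \<union> C)" and f_K: "\<And>x. x \<in> K \<Longrightarrow> f x = 0"
    and inj: "inj_on f (span C)"
  shows "dim D = dim (f ` D) + dim K"
proof -
  define X where "X = D \<inter> span C"
  have X: "subspace X" unfolding X_def using D by (auto intro: subspace_inter)
  have D_sum: "D = {x + y |x y. x \<in> K \<and> y \<in> X}"
  proof (intro equalityI subsetI)
    fix v assume v: "v \<in> D"
    obtain k y where ky: "v = k + y" "k \<in> span K" "y \<in> span C"
      using D_span v by (auto simp: span_Un)
    then have "k \<in> K" using span_eq_iff[THEN iffD2, OF K(1)] by simp
    then have "y \<in> D" using v ky K(2) D by (metis add_diff_cancel_left' subsetD subspace_diff)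
    with ky \<open>k \<in> K\<close> show "v \<in> {x + y |x y. x \<in> K \<and> y \<in> X}" by (auto simp: X_def)
  qed (use K D in \<open>auto simp: X_def intro: subspace_add\<close>)
  have "K \<inter> X = {0}"
  proof (intro equalityI subsetI)
    fix x assume "x \<in> K \<inter> X"
    then have "f x = f 0" "x \<in> span C" using f_K linear_0[OF f] by (auto simp: X_def)
    then show "x \<in> {0}" using inj span_zero by (auto simp: inj_on_def)
  qed (use K X in \<open>auto intro: subspace_0\<close>)
  then have "dim D = dim K + dim X"
    using dim_sums_Int[OF K(1) X] D_sum by simp
  moreover have "f ` D = f ` X"
  proof (intro equalityI subsetI)
    fix z assume "z \<in> f ` D"
    then obtain k y where "z = f (k + y)" "k \<in> K" "y \<in> X" using D_sum by auto
    then show "z \<in> f ` X" using f_K by (auto simp: linear_add[OF f])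
  qed (auto simp: X_def)
  moreover have "dim (f ` X) = dim X"
  proof (rule dim_image_eq[OF f])
    have "span X \<subseteq> span C" unfolding X_def by (metis inf_le2 span_mono span_span)
    then show "inj_on f (span X)" by (rule inj_on_subset[OF inj])
  qed
  ultimately show ?thesis by simp
qed

lemma P_N_subset_Upsilon_space: "P_N \<subseteq> Upsilon_space"
  unfolding P_N_def using eta_in_Upsilon_space subspace_Upsilon_space
  by (intro hull_minimal) (auto intro: subspace_imp_convex)

definition complete_dag_diffs :: "(real ^ ('n::finite \<times> 'n set)) set" where
  "complete_dag_diffs = {eta (order_dag UNIV r1) - eta (order_dag UNIV r2) | r1 r2. inj r1 \<and> inj r2}"

lemma cvec_span_complete_dag_diffs:
  fixes w :: "real ^ ('n::finite \<times> 'n set)"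
  assumes "w \<in> span complete_dag_diffs"
  shows "cvec w = 0"
proof -
  have "cvec x = 0" if "x \<in> complete_dag_diffs" for x :: "real ^ ('n \<times> 'n set)"
    using that by (auto simp: complete_dag_diffs_def linear_diff[OF linear_cvec] cvec_eta_complete)
  then show ?thesis using linear_eq_0_on_span[OF linear_cvec] assms by blast
qed

definition pick :: "'n set \<Rightarrow> 'n" where
  "pick T = (SOME x. x \<in> T)"

lemma pick_in: "T \<noteq> {} \<Longrightarrow> pick T \<in> T"
  unfolding pick_def by (rule someI_ex) auto

text \<open>One parent-set vector per \<open>T \<in> \<S>\<close>; \<open>cvec\<close> maps them to a basis of \<open>\<real>^\<S>\<close> that is
  unitriangular with respect to inclusion of sets.\<close>
definition canonical_vec :: "'n::finite set \<Rightarrow> real ^ ('n \<times> 'n set)" where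
  "canonical_vec T = parent_vec (pick T) (T - {pick T})"

definition canonical_vecs :: "(real ^ ('n::finite \<times> 'n set)) set" where
  "canonical_vecs = canonical_vec ` {T. 2 \<le> card T}"

lemma canonical_vec_eq_axis: "2 \<le> card T \<Longrightarrow> canonical_vec T = axis (pick T, T - {pick T}) 1"
  using card_ge_2_Diff_singleton_nonempty[of T "pick T"]
  by (simp add: canonical_vec_def parent_vec_def)

lemma inj_on_canonical_vec: "inj_on canonical_vec {T. 2 \<le> card T}"
proof (rule inj_onI)
  fix T1 T2 :: "'n::finite set"
  assume T: "T1 \<in> {T. 2 \<le> card T}" "T2 \<in> {T. 2 \<le> card T}" "canonical_vec T1 = canonical_vec T2"
  then have "axis (pick T1, T1 - {pick T1}) 1 = (axis (pick T2, T2 - {pick T2}) 1 :: real ^ ('n \<times> 'n set))"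
    using canonical_vec_eq_axis[of T1] canonical_vec_eq_axis[of T2] by simp
  then have "(pick T1, T1 - {pick T1}) = (pick T2, T2 - {pick T2})"
    by (simp only: axis_eq_axis) auto
  moreover have "pick T1 \<in> T1" "pick T2 \<in> T2" using T(1,2) by (auto intro!: pick_in)
  ultimately show "T1 = T2" by (metis insert_Diff prod.inject)
qed

lemma cvec_canonical_vec:
  assumes "2 \<le> card T"
  shows "cvec (canonical_vec T) $ S = (if 2 \<le> card S \<and> pick T \<in> S \<and> S \<subseteq> T then 1 else 0)"
proof -
  have "pick T \<in> T" using assms by (auto intro!: pick_in)
  then have "S - {pick T} \<subseteq> T - {pick T} \<longleftrightarrow> S \<subseteq> T" if "pick T \<in> S" using that by auto
  then show ?thesis using card_ge_2_Diff_singleton_nonempty[OF assms, of "pick T"]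
    by (auto simp: canonical_vec_def cvec_parent_vec)
qed

lemma inj_on_cvec_span_canonical_vecs:
  "inj_on cvec (span (canonical_vecs :: (real ^ ('n::finite \<times> 'n set)) set))"
  unfolding linear_inj_on_iff_eq_0[OF linear_cvec subspace_span]
proof (intro ballI impI)
  let ?S2 = "{T::'n set. 2 \<le> card T}"
  fix c :: "real ^ ('n \<times> 'n set)" assume "c \<in> span canonical_vecs" and c0: "cvec c = 0"
  then obtain u where "c = (\<Sum>v\<in>canonical_vecs. u v *\<^sub>R v)"
    using span_finite[of canonical_vecs] by (auto simp: canonical_vecs_def)
  then have c: "c = (\<Sum>T\<in>?S2. (u \<circ> canonical_vec) T *\<^sub>R canonical_vec T)"
    unfolding canonical_vecs_def by (simp add: sum.reindex[OF inj_on_canonical_vec])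
  define \<alpha> where "\<alpha> = u \<circ> canonical_vec"
  have "\<alpha> T = 0" if "T \<in> ?S2" for T
  proof (rule ccontr)
    assume "\<alpha> T \<noteq> 0"
    text \<open>By triangularity, \<open>cvec c\<close> at a largest set with nonzero coefficient is that coefficient.\<close>
    define Z where "Z = {T\<in>?S2. \<alpha> T \<noteq> 0}"
    have "Z \<noteq> {}" using that \<open>\<alpha> T \<noteq> 0\<close> by (auto simp: Z_def)
    then obtain S where S: "S \<in> Z" "\<And>T. T \<in> Z \<Longrightarrow> card T \<le> card S"
      using Max_in[of "card ` Z"] Max_ge[of "card ` Z"] by fastforce
    have "cvec c $ S = (\<Sum>T\<in>?S2. \<alpha> T * cvec (canonical_vec T) $ S)"
      unfolding c \<alpha>_def[symmetric]
      by (simp add: linear_sum[OF linear_cvec] linear_scale[OF linear_cvec])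
    also have "\<dots> = (\<Sum>T\<in>?S2. if T = S then \<alpha> S else 0)"
    proof (rule sum.cong[OF refl])
      fix T assume T: "T \<in> ?S2"
      show "\<alpha> T * cvec (canonical_vec T) $ S = (if T = S then \<alpha> S else 0)"
      proof (cases "T = S \<or> \<alpha> T = 0")
        case True
        have "S \<noteq> {}" using S(1) by (auto simp: Z_def)
        with True show ?thesis using S(1) pick_in[of S] by (auto simp: Z_def cvec_canonical_vec)
      next
        case False
        then have "\<not> S \<subset> T" using S(2)[of T] T psubset_card_mono[of T S] by (auto simp: Z_def)
        then show ?thesis using T False by (auto simp: cvec_canonical_vec)
      qed
    qed
    also have "\<dots> = \<alpha> S" using S(1) by (simp add: Z_def)
    finally show False using c0 S(1) by (simp add: Z_def)
  qed
  then show "c = 0" unfolding c \<alpha>_def[symmetric] by simp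
qed

lemma parent_vec_in_span: "parent_vec a B \<in> span (complete_dag_diffs \<union> canonical_vecs)"
proof (induction "card (insert a B)" arbitrary: a B rule: less_induct)
  case less
  let ?V = "span (complete_dag_diffs \<union> canonical_vecs)"
  show ?case
  proof (cases "B = {} \<or> a \<in> B")
    case True
    then show ?thesis by (auto simp: parent_vec_def span_zero)
  next
    case False
    define T where "T = insert a B"
    define h where "h = pick T"
    from False obtain b where "b \<in> B" "a \<noteq> b" by auto
    then have T2: "2 \<le> card T" using card_mono[of T "{a, b}"] by (auto simp: T_def)
    have h: "h \<in> T" unfolding h_def T_def by (rule pick_in) simp
    have "canonical_vec T \<in> ?V" using T2 by (intro span_base) (auto simp: canonical_vecs_def)
    show ?thesis
    proof (cases "h = a")
      case True
      then have "parent_vec a B = canonical_vec T"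
        using False unfolding canonical_vec_def h_def[symmetric] by (simp add: T_def)
      with \<open>canonical_vec T \<in> ?V\<close> show ?thesis by simp
    next
      case ha: False
      text \<open>Two complete DAGs differing by the swap of \<open>a\<close> and \<open>h\<close> express \<open>parent_vec a B\<close>
        through \<open>canonical_vec T\<close> and parent vectors of smaller families.\<close>
      define B' where "B' = B - {h}"
      have B': "h \<notin> B'" "a \<notin> B'" "insert h B' = B" "insert a B' = T - {h}"
        using h ha False by (auto simp: B'_def T_def)
      obtain r1 r2 where r: "inj r1" "inj r2"
        "eta (order_dag UNIV r1) - eta (order_dag UNIV r2) = parent_vec a B' + parent_vec h (insert a B')
           - parent_vec h B' - parent_vec a (insert h B')"
        using eta_order_dag_swap[of a h B'] ha B' by metis
      have "insert a B' \<subset> insert a B" "insert h B' \<subset> insert a B"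
        using B' False h by (auto simp: T_def)
      then have "parent_vec a B' \<in> ?V" "parent_vec h B' \<in> ?V"
        by (auto intro!: less psubset_card_mono)
      moreover have "eta (order_dag UNIV r1) - eta (order_dag UNIV r2) \<in> ?V"
        using r(1,2) by (intro span_base) (auto simp: complete_dag_diffs_def)
      moreover have "parent_vec a B = parent_vec a B' + canonical_vec T - parent_vec h B'
          - (eta (order_dag UNIV r1) - eta (order_dag UNIV r2))"
        using r(3) B' by (simp add: canonical_vec_def h_def)
      ultimately show ?thesis using \<open>canonical_vec T \<in> ?V\<close> by (simp add: span_add span_diff)
    qed
  qed
qed

lemma Upsilon_space_subset_span:
  "(Upsilon_space :: (real ^ ('n::finite \<times> 'n set)) set) \<subseteq> span (complete_dag_diffs \<union> canonical_vecs)"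
proof
  fix v :: "real ^ ('n \<times> 'n set)" assume v: "v \<in> Upsilon_space"
  have "v = (\<Sum>p\<in>UNIV. v $ p *\<^sub>R axis p 1)"
    using basis_expansion[of v] by (simp add: scalar_mult_eq_scaleR)
  also have "\<dots> = (\<Sum>p\<in>UNIV. v $ p *\<^sub>R parent_vec (fst p) (snd p))"
    using v by (intro sum.cong refl) (auto simp: Upsilon_space_def parent_vec_def in_Upsilon_def)
  also have "\<dots> \<in> span (complete_dag_diffs \<union> canonical_vecs)"
    by (intro span_sum span_scale parent_vec_in_span)
  finally show "v \<in> span (complete_dag_diffs \<union> canonical_vecs)" .
qed

lemma aff_dim_eq_aff_dim_cvec_add:
  fixes F :: "(real ^ ('n::finite \<times> 'n set)) set"
  assumes F: "F \<subseteq> Upsilon_space" and complete: "\<And>r. inj r \<Longrightarrow> eta (order_dag UNIV r) \<in> F"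
  shows "aff_dim F = aff_dim (cvec ` F)
    + int (dim (span (complete_dag_diffs :: (real ^ ('n \<times> 'n set)) set)))"
proof -
  obtain r0 :: "'n \<Rightarrow> nat" where "inj r0" using obtain_bounded_injection by metis
  define e0 where "e0 = eta (order_dag UNIV r0)"
  have e0: "e0 \<in> F" unfolding e0_def by (rule complete[OF \<open>inj r0\<close>])
  define D where "D = span ((\<lambda>x. x - e0) ` F)"
  define K where "K = span (complete_dag_diffs :: (real ^ ('n \<times> 'n set)) set)"
  have "w \<in> D" if w: "w \<in> complete_dag_diffs" for w :: "real ^ ('n \<times> 'n set)"
  proof -
    obtain r1 r2 where "inj r1" "inj r2" "w = eta (order_dag UNIV r1) - eta (order_dag UNIV r2)"
      using w by (auto simp: complete_dag_diffs_def)
    then have "w = (eta (order_dag UNIV r1) - e0) - (eta (order_dag UNIV r2) - e0)"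
      "eta (order_dag UNIV r1) - e0 \<in> D" "eta (order_dag UNIV r2) - e0 \<in> D"
      using complete unfolding D_def by (auto intro: span_base)
    then show ?thesis unfolding D_def by (metis span_diff)
  qed
  then have "K \<subseteq> D" unfolding K_def D_def by (intro span_minimal) auto
  moreover have "D \<subseteq> span (K \<union> canonical_vecs)"
  proof -
    have "(\<lambda>x. x - e0) ` F \<subseteq> Upsilon_space"
      using F e0 subspace_Upsilon_space by (auto intro: subspace_diff)
    then have "D \<subseteq> Upsilon_space" unfolding D_def using subspace_Upsilon_space by (intro span_minimal)
    also have "\<dots> \<subseteq> span (complete_dag_diffs \<union> canonical_vecs)"
      by (rule Upsilon_space_subset_span)
    also have "\<dots> \<subseteq> span (K \<union> canonical_vecs)"
      unfolding K_def by (intro span_mono Un_mono span_superset order_refl)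
    finally show ?thesis .
  qed
  ultimately have "dim D = dim (cvec ` D) + dim K"
    using inj_on_cvec_span_canonical_vecs
    by (intro dim_eq_dim_image_add_dim[OF linear_cvec]) (auto simp: D_def K_def cvec_span_complete_dag_diffs)
  moreover have "aff_dim F = int (dim D)"
    using e0 aff_dim_eq_dim_subtract[of e0 F] by (simp add: hull_inc D_def)
  moreover have "aff_dim (cvec ` F) = int (dim (cvec ` D))"
  proof -
    have "(\<lambda>x. x - cvec e0) ` cvec ` F = cvec ` ((\<lambda>x. x - e0) ` F)"
      by (auto simp: image_image linear_diff[OF linear_cvec])
    then show ?thesis using e0 aff_dim_eq_dim_subtract[of "cvec e0" "cvec ` F"]
      by (simp add: hull_inc D_def linear_span_image[OF linear_cvec, symmetric])
  qed
  ultimately show ?thesis by (simp add: K_def)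
qed

section \<open>Faces of the polytopes\<close>

lemma face_of_sum_exchange:
  fixes S :: "'a::real_vector set"
  assumes F: "F face_of S" and "x \<in> F" "y \<in> F" "x' \<in> S" "y' \<in> S" and sum: "x + y = x' + y'"
  shows "x' \<in> F"
proof -
  define m where "m = midpoint x y"
  have "m \<in> F"
    using convexD[OF face_of_imp_convex[OF F] \<open>x \<in> F\<close> \<open>y \<in> F\<close>, of "1/2" "1/2"]
    by (simp add: m_def midpoint_def scaleR_right_distrib)
  moreover have "m = midpoint x' y'" using sum by (simp add: m_def midpoint_def)
  ultimately show ?thesis
  proof (cases "x' = y'")
    case False
    then have "midpoint x' y' \<in> open_segment x' y'" by simp
    with \<open>m \<in> F\<close> \<open>m = midpoint x' y'\<close> show ?thesis
      using face_ofD[OF F _ \<open>x' \<in> S\<close> \<open>y' \<in> S\<close>] by blast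
  qed simp
qed

lemma facet_of_eq_face_of_superset:
  fixes S :: "'a::euclidean_space set"
  assumes "F facet_of S" "Z face_of S" "F \<subseteq> Z" "Z \<noteq> S" "convex S"
  shows "F = Z"
proof (rule ccontr)
  assume "F \<noteq> Z"
  then have "aff_dim F < aff_dim Z"
    using assms by (metis face_of_aff_dim_lt face_of_imp_convex face_of_subset
      face_of_imp_subset facet_of_imp_face_of)
  moreover have "aff_dim Z < aff_dim S" using face_of_aff_dim_lt assms(2,4,5) by blast
  ultimately show False using assms(1) by (simp add: facet_of_def)
qed

lemma convex_P_N: "convex P_N"
  by (simp add: P_N_def)

lemma eta_in_P_N: "is_dag E \<Longrightarrow> eta E \<in> P_N"
  unfolding P_N_def by (rule hull_inc) auto

lemma face_of_P_N_hyperplane: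
  assumes "\<forall>v\<in>P_N. ob \<bullet> v \<le> u"
  shows "{v \<in> P_N. ob \<bullet> v = u} face_of P_N"
  using face_of_Int_supporting_hyperplane_le[OF convex_P_N, of ob u] assms
  by (simp add: Collect_conj_eq Int_commute)

lemma se_face_eq_image_cvec:
  assumes "se_objective ob"
  shows "{c \<in> C_N. tau ob \<bullet> c = u} = cvec ` {v \<in> P_N. ob \<bullet> v = u}"
  unfolding C_N_eq_image_cvec using inner_tau_cvec[OF assms] by auto

lemma face_of_C_N_hyperplane:
  assumes "se_objective ob" "\<forall>v\<in>P_N. ob \<bullet> v \<le> u"
  shows "{c \<in> C_N. tau ob \<bullet> c = u} face_of C_N"
proof -
  have "\<forall>c\<in>C_N. tau ob \<bullet> c \<le> u"
    unfolding C_N_eq_image_cvec using inner_tau_cvec[OF assms(1)] assms(2) by auto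
  then show ?thesis
    using face_of_Int_supporting_hyperplane_le[of C_N "tau ob" u]
    by (simp add: C_N_def Collect_conj_eq Int_commute)
qed

lemma se_face_contains_all_complete_dags:
  assumes se: "se_objective ob" and r0: "inj r0" "eta (order_dag UNIV r0) \<in> {v \<in> P_N. ob \<bullet> v = u}"
    and r: "inj r"
  shows "eta (order_dag UNIV r) \<in> {v \<in> P_N. ob \<bullet> v = u}"
  using se_objective_order_dag[OF se, of r UNIV r0] r r0 eta_in_P_N[OF is_dag_order_dag] by simp

definition reparent :: "('n \<times> 'n) set \<Rightarrow> 'n \<Rightarrow> 'n set \<Rightarrow> ('n \<times> 'n) set" where
  "reparent G x P = {(y, w). (y, w) \<in> G \<and> w \<noteq> x} \<union> {(y, w). w = x \<and> y \<in> P}"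

lemma pa_reparent: "pa (reparent G x P) w = (if w = x then P else pa G w)"
  by (auto simp: pa_def reparent_def)

lemma face_reparent_exchange:
  assumes F: "F face_of P_N" and G: "is_dag G" "eta G \<in> F" and H: "is_dag H" "eta H \<in> F"
    and "is_dag (reparent G x (pa H x))" "is_dag (reparent H x (pa G x))"
  shows "eta (reparent G x (pa H x)) \<in> F"
proof (rule face_of_sum_exchange[OF F G(2) H(2)])
  show "eta (reparent G x (pa H x)) \<in> P_N" "eta (reparent H x (pa G x)) \<in> P_N"
    using assms by (auto intro: eta_in_P_N)
  have "parent_vec w (pa G w) + parent_vec w (pa H w)
      = parent_vec w (pa (reparent G x (pa H x)) w) + parent_vec w (pa (reparent H x (pa G x)) w)" for w
    by (simp add: pa_reparent add.commute)
  then show "eta G + eta H = eta (reparent G x (pa H x)) + eta (reparent H x (pa G x))"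
    unfolding eta_eq_sum_parent_vec by (simp add: sum.distrib[symmetric])
qed

lemma face_of_P_N_eq_convex_hull:
  assumes "F face_of P_N"
  shows "F = convex hull {eta G | G. is_dag G \<and> eta G \<in> F}"
proof -
  obtain V where V: "V \<subseteq> eta ` {E. is_dag E}" "F = convex hull V"
    using face_of_convex_hull_subset[OF finite_imp_compact assms[unfolded P_N_def]]
    unfolding P_N_def by auto
  have "V \<subseteq> {eta G | G. is_dag G \<and> eta G \<in> F}" using V hull_inc by fastforce
  then have "F \<subseteq> convex hull {eta G | G. is_dag G \<and> eta G \<in> F}" unfolding V(2) by (rule hull_mono)
  moreover have "convex hull {eta G | G. is_dag G \<and> eta G \<in> F} \<subseteq> F"
    using face_of_imp_convex[OF assms] by (intro hull_minimal) auto
  ultimately show ?thesis by blast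
qed

lemma face_of_P_N_coordinate_zero: "{v \<in> P_N. v $ p = 0} face_of P_N"
proof -
  have "P_N \<subseteq> {v. 0 \<le> v $ p}"
    unfolding P_N_def by (rule hull_minimal) (auto simp: eta_def convex_def)
  then show ?thesis
    using face_of_Int_supporting_hyperplane_le[OF convex_P_N, of "- axis p 1" 0]
    by (auto simp: inner_axis' Collect_conj_eq Int_commute subset_iff)
qed

lemma markov_equiv_complete_dags_with_parent_set:
  fixes a :: "'n::finite"
  assumes "a \<notin> B"
  obtains G H where "is_dag G" "is_dag H" "markov_equiv G H" "pa G a = B" "pa H a = {}"
proof -
  obtain r :: "'n \<Rightarrow> nat" where r: "inj r" "\<And>x. r x < CARD('n)"
    using obtain_bounded_injection by metis
  define R where "R = insert a B"
  define last where "last x = (if x = a then CARD('n) else r x)" for x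
  define first where "first x = (if x = a then 0 else Suc (r x))" for x
  have "inj_on last R" "inj_on first R"
    using r unfolding inj_on_def last_def first_def by (auto simp: inj_eq) (metis less_irrefl r(2))+
  moreover have "pa (order_dag R last) a = B" "pa (order_dag R first) a = {}"
    using r(2) assms unfolding pa_order_dag R_def last_def first_def by auto
  ultimately show ?thesis
    using that is_dag_order_dag markov_equiv_order_dag by blast
qed

lemma se_facet_realizes_parent_set:
  fixes ob :: "real ^ ('n::finite \<times> 'n set)"
  assumes se: "se_objective ob" and valid: "\<forall>v\<in>P_N. ob \<bullet> v \<le> u"
    and facet: "{v \<in> P_N. ob \<bullet> v = u} facet_of P_N" and ups: "B \<noteq> {}" "a \<notin> B"
  obtains G where "is_dag G" "eta G \<in> {v \<in> P_N. ob \<bullet> v = u}" "pa G a = B"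
proof (rule ccontr)
  assume none: "\<not> thesis"
  define F where "F = {v \<in> P_N. ob \<bullet> v = u}"
  define Z where "Z = {v \<in> P_N. v $ (a, B) = 0}"
  text \<open>Every DAG vertex of \<open>F\<close> lies in \<open>Z\<close>, hence so does \<open>F\<close>, and the facet \<open>F\<close>
    equals the face \<open>Z\<close>; but \<open>Z\<close> separates two Markov equivalent complete DAGs.\<close>
  have F_face: "F face_of P_N" unfolding F_def using face_of_P_N_hyperplane[OF valid] .
  have "{eta G | G. is_dag G \<and> eta G \<in> F} \<subseteq> {v. v $ (a, B) = 0}"
  proof safe
    fix G assume "is_dag G" "eta G \<in> F"
    then have "pa G a \<noteq> B" using none that unfolding F_def by blast
    then show "eta G $ (a, B) = 0" by (simp add: eta_component)
  qed
  then have "F \<subseteq> {v. v $ (a, B) = 0}"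
    by (subst face_of_P_N_eq_convex_hull[OF F_face], intro hull_minimal)
      (auto simp: convex_def algebra_simps)
  then have "F \<subseteq> Z" unfolding Z_def F_def by auto
  obtain G H where GH: "is_dag G" "is_dag H" "markov_equiv G H" "pa G a = B" "pa H a = {}"
    using markov_equiv_complete_dags_with_parent_set[OF ups(2)] by blast
  then have coords: "eta G $ (a, B) = 1" "eta H $ (a, B) = 0" and in_P_N: "eta G \<in> P_N" "eta H \<in> P_N"
    using ups by (simp_all add: eta_component eta_in_P_N)
  then have "eta G \<notin> Z" "eta G \<in> P_N" by (simp_all add: Z_def)
  then have "Z \<noteq> P_N" by blast
  then have "F = Z"
    using facet_of_eq_face_of_superset[OF facet[folded F_def]
        face_of_P_N_coordinate_zero[of "(a, B)", folded Z_def] \<open>F \<subseteq> Z\<close> _ convex_P_N]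
    by simp
  then have "eta H \<in> F" using in_P_N coords by (simp add: Z_def)
  then have "eta G \<in> F" using se GH in_P_N unfolding se_objective_def F_def by auto
  then show False using \<open>F = Z\<close> coords by (simp add: Z_def)
qed

definition complete_above :: "'n set \<Rightarrow> ('n \<Rightarrow> nat) \<Rightarrow> ('n \<times> 'n) set \<Rightarrow> bool" where
  "complete_above Z r G \<longleftrightarrow> (\<forall>z\<in>Z. pa G z = - Z \<union> {y\<in>Z. r y < r z})
     \<and> (\<forall>w. w \<notin> Z \<longrightarrow> pa G w \<subseteq> - Z) \<and> inj_on r Z"

lemma is_dag_reparent_sink:
  fixes G :: "('n::finite \<times> 'n) set"
  assumes G: "is_dag G" and x: "x \<notin> Z" and below: "\<And>w. w \<notin> Z \<Longrightarrow> pa G w \<subseteq> - Z"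
    and sink: "\<And>y. y \<notin> Z \<Longrightarrow> (x, y) \<notin> G" and P: "P \<subseteq> - Z - {x}"
  shows "is_dag (reparent G x P)"
proof -
  obtain t :: "'n \<Rightarrow> nat" where t: "\<And>y w. (y, w) \<in> G \<Longrightarrow> t y < t w"
    using is_dag_rank[OF G] by blast
  define M where "M = Suc (Max (range t))"
  have t_lt: "t y < M" for y unfolding M_def by (simp add: le_imp_less_Suc)
  define t' where "t' w = (if w \<in> Z then M + 1 + t w else if w = x then M else t w)" for w
  show ?thesis unfolding is_dag_def
  proof (rule acyclic_if_rank_increasing[of _ t'])
    fix y w assume yw: "(y, w) \<in> reparent G x P"
    show "t' y < t' w"
    proof (cases "w = x")
      case True
      then show ?thesis using yw P x t_lt[of y] by (auto simp: reparent_def t'_def)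
    next
      case False
      then have yG: "(y, w) \<in> G" using yw by (auto simp: reparent_def)
      show ?thesis
      proof (cases "w \<in> Z")
        case False
        then have "y \<notin> Z" "y \<noteq> x" using below[of w] sink[of w] yG by (auto simp: pa_def)
        then show ?thesis using t[OF yG] False \<open>w \<noteq> x\<close> by (auto simp: t'_def)
      qed (use t[OF yG] t_lt[of y] in \<open>auto simp: t'_def\<close>)
    qed
  qed
qed

lemma complete_above_extend:
  fixes ob :: "real ^ ('n::finite \<times> 'n set)"
  assumes se: "se_objective ob" and valid: "\<forall>v\<in>P_N. ob \<bullet> v \<le> u"
    and facet: "{v \<in> P_N. ob \<bullet> v = u} facet_of P_N"
    and G: "is_dag G" "eta G \<in> {v \<in> P_N. ob \<bullet> v = u}" "complete_above Z r G"
    and card: "2 \<le> card (- Z)"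
  obtains x r' G' where "x \<notin> Z" "is_dag G'" "eta G' \<in> {v \<in> P_N. ob \<bullet> v = u}"
    "complete_above (insert x Z) r' G'"
proof -
  define F where "F = {v \<in> P_N. ob \<bullet> v = u}"
  have above: "\<And>z. z \<in> Z \<Longrightarrow> pa G z = - Z \<union> {y\<in>Z. r y < r z}"
      and below: "\<And>w. w \<notin> Z \<Longrightarrow> pa G w \<subseteq> - Z" and "inj_on r Z"
    using G(3) by (auto simp: complete_above_def)
  have "- Z \<noteq> {}" using card by auto
  then obtain x where x: "x \<notin> Z" and sink: "\<And>y. y \<notin> Z \<Longrightarrow> (x, y) \<notin> G"
    using is_dag_sink[OF G(1), of "- Z"] by auto
  define B where "B = - Z - {x}"
  obtain H where H: "is_dag H" "eta H \<in> F" "pa H x = B"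
    using se_facet_realizes_parent_set[OF se valid facet, of B x] card_ge_2_Diff_singleton_nonempty[OF card]
    unfolding F_def B_def by auto
  define G' where "G' = reparent G x B"
  have "pa G x \<subseteq> B" using below[OF x] is_dag_irrefl[OF G(1)] by (auto simp: B_def pa_def)
  then have "reparent H x (pa G x) \<subseteq> H" using H(3) by (auto simp: reparent_def pa_def)
  then have "is_dag (reparent H x (pa G x))"
    using H(1) by (auto simp: is_dag_def intro: acyclic_subset)
  moreover have G'_dag: "is_dag G'"
    unfolding G'_def using G(1) x below sink by (rule is_dag_reparent_sink) (auto simp: B_def)
  ultimately have "eta G' \<in> F"
    using face_reparent_exchange[OF face_of_P_N_hyperplane[OF valid] G(1,2) H(1) H(2)[unfolded F_def],
        where x = x]
    by (simp add: G'_def H(3) F_def)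
  define r' where "r' y = (if y = x then 0 else Suc (r y))" for y
  have "complete_above (insert x Z) r' G'"
    unfolding complete_above_def
  proof (intro conjI ballI allI impI)
    fix z assume "z \<in> insert x Z"
    then show "pa G' z = - insert x Z \<union> {y \<in> insert x Z. r' y < r' z}"
      using above x by (auto simp: G'_def pa_reparent B_def r'_def)
  next
    fix w assume "w \<notin> insert x Z"
    moreover have "x \<notin> pa G w" using sink[of w] \<open>w \<notin> insert x Z\<close> by (simp add: pa_def)
    ultimately show "pa G' w \<subseteq> - insert x Z" using below[of w] by (auto simp: G'_def pa_reparent)
  next
    show "inj_on r' (insert x Z)"
      using \<open>inj_on r Z\<close> x by (auto simp: inj_on_def r'_def)
  qed
  with \<open>eta G' \<in> F\<close> show ?thesis using that x G'_dag by (simp add: F_def)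
qed

lemma complete_above_co_singleton:
  fixes G :: "('n::finite \<times> 'n) set"
  assumes G: "is_dag G" "complete_above Z r G" and card: "card (- Z) \<le> 1"
  obtains r' where "inj r'" "eta G = eta (order_dag UNIV r')"
proof -
  have above: "\<And>z. z \<in> Z \<Longrightarrow> pa G z = - Z \<union> {y\<in>Z. r y < r z}"
      and below: "\<And>w. w \<notin> Z \<Longrightarrow> pa G w \<subseteq> - Z" and "inj_on r Z"
    using G(2) by (auto simp: complete_above_def)
  have one: "x = y" if "x \<notin> Z" "y \<notin> Z" for x y
  proof -
    have "card {x, y} \<le> card (- Z)" using that by (intro card_mono) auto
    then show ?thesis using card by (cases "x = y") auto
  qed
  define r' where "r' y = (if y \<in> Z then Suc (r y) else 0)" for y
  have "inj r'"
  proof (rule injI)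
    fix x y assume "r' x = r' y"
    then show "x = y" using \<open>inj_on r Z\<close> one by (auto simp: r'_def inj_on_def split: if_splits)
  qed
  moreover have "pa G w = pa (order_dag UNIV r') w" for w
  proof (cases "w \<in> Z")
    case True
    then show ?thesis using above[OF True] by (auto simp: pa_order_dag r'_def)
  next
    case False
    have "w \<notin> pa G w" using is_dag_irrefl[OF G(1)] by (simp add: pa_def)
    then have "pa G w = {}" using below[OF False] one False by blast
    then show ?thesis using False by (simp add: pa_order_dag r'_def)
  qed
  then have "eta G = eta (order_dag UNIV r')" by (rule eta_cong_pa)
  ultimately show ?thesis by (rule that)
qed

lemma se_facet_contains_complete_dag:
  fixes ob :: "real ^ ('n::finite \<times> 'n set)"
  assumes se: "se_objective ob" and valid: "\<forall>v\<in>P_N. ob \<bullet> v \<le> u"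
    and facet: "{v \<in> P_N. ob \<bullet> v = u} facet_of P_N"
  obtains r where "inj r" "eta (order_dag UNIV r) \<in> {v \<in> P_N. ob \<bullet> v = u}"
proof -
  define F where "F = {v \<in> P_N. ob \<bullet> v = u}"
  have grow: "\<exists>Z' r' G'. is_dag G' \<and> eta G' \<in> F \<and> complete_above Z' r' G' \<and> card (- Z') \<le> 1"
    if "is_dag G" "eta G \<in> F" "complete_above Z r G" for Z r G
    using that
  proof (induction "card (- Z)" arbitrary: Z r G rule: less_induct)
    case less
    show ?case
    proof (cases "2 \<le> card (- Z)")
      case True
      then obtain x r' G' where "x \<notin> Z" "is_dag G'" "eta G' \<in> F" "complete_above (insert x Z) r' G'"
        using complete_above_extend[OF se valid facet less.prems[unfolded F_def] True]
        unfolding F_def by blast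
      moreover have "card (- insert x Z) < card (- Z)"
        using \<open>x \<notin> Z\<close> by (intro psubset_card_mono) auto
      ultimately show ?thesis using less.hyps by blast
    next
      case False
      with less.prems show ?thesis by (intro exI[of _ Z] exI[of _ r] exI[of _ G]) auto
    qed
  qed
  have "F \<noteq> {}" using facet by (simp add: facet_of_def F_def)
  then have "{eta G | G. is_dag G \<and> eta G \<in> F} \<noteq> {}"
    using face_of_P_N_eq_convex_hull[OF face_of_P_N_hyperplane[OF valid, folded F_def]]
    by (metis convex_hull_empty)
  then obtain G0 where "is_dag G0" "eta G0 \<in> F" by blast
  moreover have "complete_above {} (\<lambda>_. 0) G0" by (simp add: complete_above_def)
  ultimately obtain Z r G where G: "is_dag G" "eta G \<in> F" "complete_above Z r G" "card (- Z) \<le> 1"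
    using grow by blast
  then show ?thesis
    using complete_above_co_singleton[OF G(1,3,4)] that by (metis F_def)
qed

lemma aff_dim_P_N:
  "aff_dim (P_N :: (real ^ ('n::finite \<times> 'n set)) set)
     = aff_dim (C_N :: (real ^ 'n set) set) + int (dim (span (complete_dag_diffs :: (real ^ ('n \<times> 'n set)) set)))"
  unfolding C_N_eq_image_cvec
  by (rule aff_dim_eq_aff_dim_cvec_add[OF P_N_subset_Upsilon_space eta_in_P_N[OF is_dag_order_dag]])

lemma aff_dim_se_face:
  fixes ob :: "real ^ ('n::finite \<times> 'n set)"
  assumes se: "se_objective ob" and r0: "inj r0" "eta (order_dag UNIV r0) \<in> {v \<in> P_N. ob \<bullet> v = u}"
  shows "aff_dim {v \<in> P_N. ob \<bullet> v = u}
    = aff_dim {c \<in> C_N. tau ob \<bullet> c = u} + int (dim (span (complete_dag_diffs :: (real ^ ('n \<times> 'n set)) set)))"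
  unfolding se_face_eq_image_cvec[OF se]
  using P_N_subset_Upsilon_space se_face_contains_all_complete_dags[OF se r0]
  by (intro aff_dim_eq_aff_dim_cvec_add) auto

lemma se_facet_iff_facet_C_N_one_imset:
  fixes ob :: "real ^ ('n::finite \<times> 'n set)"
  assumes se: "se_objective ob" and valid: "\<forall>v\<in>P_N. ob \<bullet> v \<le> u"
  shows "{v \<in> P_N. ob \<bullet> v = u} facet_of P_N \<longleftrightarrow>
         {c \<in> C_N. tau ob \<bullet> c = u} facet_of C_N \<and> one_imset \<in> {c \<in> C_N. tau ob \<bullet> c = u}"
    (is "?FP facet_of P_N \<longleftrightarrow> ?FC facet_of C_N \<and> one_imset \<in> ?FC")
proof -
  have faces: "?FP face_of P_N" "?FC face_of C_N"
    using face_of_P_N_hyperplane[OF valid] face_of_C_N_hyperplane[OF se valid] .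
  have dims_if_complete: "aff_dim ?FP - aff_dim (P_N :: (real ^ ('n \<times> 'n set)) set)
      = aff_dim ?FC - aff_dim (C_N :: (real ^ 'n set) set)"
    if "inj r" "eta (order_dag UNIV r) \<in> ?FP" for r
    using aff_dim_se_face[OF se that] aff_dim_P_N[where 'n='n] by linarith
  show ?thesis
  proof
    assume facet: "?FP facet_of P_N"
    then obtain r where r: "inj r" "eta (order_dag UNIV r) \<in> ?FP"
      using se_facet_contains_complete_dag[OF se valid] by blast
    have "cvec (eta (order_dag UNIV r)) \<in> ?FC"
      using r(2) unfolding se_face_eq_image_cvec[OF se] by blast
    then have "one_imset \<in> ?FC" by (simp add: cvec_eta_complete[OF r(1)])
    with facet faces dims_if_complete[OF r] show "?FC facet_of C_N \<and> one_imset \<in> ?FC"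
      by (auto simp: facet_of_def)
  next
    assume "?FC facet_of C_N \<and> one_imset \<in> ?FC"
    then have facet: "?FC facet_of C_N" and one: "tau ob \<bullet> one_imset = u" by auto
    obtain r :: "'n \<Rightarrow> nat" where r: "inj r" using obtain_bounded_injection by metis
    have "ob \<bullet> eta (order_dag UNIV r) = tau ob \<bullet> cvec (eta (order_dag UNIV r))"
      by (simp add: inner_tau_cvec[OF se])
    then have "eta (order_dag UNIV r) \<in> ?FP"
      using one eta_in_P_N[OF is_dag_order_dag] by (simp add: cvec_eta_complete[OF r])
    with facet faces dims_if_complete[OF r] show "?FP facet_of P_N"
      by (auto simp: facet_of_def)
  qed
qed

text \<open>A facet of \<open>C_N\<close> is cut out by some \<open>t\<close>; its pull-back \<open>t \<circ> cvec\<close> is SE because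
  \<open>cvec \<circ> eta\<close> is invariant under Markov equivalence, and \<open>tau\<close> of it agrees with \<open>t\<close> on \<open>C_N\<close>.\<close>
lemma facet_of_C_N_se_face:
  fixes F :: "(real ^ ('n::finite set)) set"
  assumes facet: "F facet_of C_N"
  obtains ob :: "real ^ ('n \<times> 'n set)" and u where "se_objective ob" "\<forall>v\<in>P_N. ob \<bullet> v \<le> u"
    "F = {c \<in> C_N. tau ob \<bullet> c = u}"
proof -
  have "polytope (C_N :: (real ^ 'n set) set)"
    unfolding polytope_def C_N_def by (intro exI[of _ "(\<lambda>E. cvec (eta E)) ` {E. is_dag E}"]) simp
  then have "polyhedron (C_N :: (real ^ 'n set) set)" by (rule polytope_imp_polyhedron)
  then obtain t u where tu: "C_N \<subseteq> {x. t \<bullet> x \<le> u}" "F = C_N \<inter> {x. t \<bullet> x = u}"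
    using facet_of_polyhedron[OF _ facet] by metis
  define ob :: "real ^ ('n \<times> 'n set)" where "ob = (\<chi> p. t \<bullet> cvec (axis p 1))"
  have ob_cvec: "ob \<bullet> v = t \<bullet> cvec v" for v by (rule inner_cvec_adjoint) (simp add: ob_def)
  have "ob $ p = 0" if p: "\<not> in_Upsilon p" for p
  proof -
    obtain a B where p: "p = (a, B)" and "B = {} \<or> a \<in> B" using p by (cases p) (auto simp: in_Upsilon_def)
    show ?thesis
    proof (cases "a \<in> B")
      case False
      then have "{S. 2 \<le> card S \<and> a \<in> S \<and> S - {a} \<subseteq> B} = {}"
        using sets_above_eq_image_insert[OF False] \<open>B = {} \<or> a \<in> B\<close> by simp
      then show ?thesis by (simp only: p ob_def vec_lambda_beta inner_cvec_axis) simp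
    qed (simp add: p ob_def inner_cvec_axis)
  qed
  moreover have "ob \<bullet> eta G = ob \<bullet> eta H" if "is_dag G" "is_dag H" "markov_equiv G H" for G H
    using markov_equiv_imp_cvec_eta_eq[OF that] by (simp add: ob_cvec)
  ultimately have se: "se_objective ob" by (auto simp: se_objective_def)
  moreover have "\<forall>v\<in>P_N. ob \<bullet> v \<le> u"
    using tu(1) by (auto simp: ob_cvec C_N_eq_image_cvec)
  moreover have "tau ob \<bullet> c = t \<bullet> c" if "c \<in> C_N" for c
    using that inner_tau_cvec[OF se] by (auto simp: C_N_eq_image_cvec ob_cvec)
  then have "F = {c \<in> C_N. tau ob \<bullet> c = u}" using tu(2) by auto
  ultimately show ?thesis by (rule that)
qed

lemma is_dag_reparent_empty: "a \<notin> B \<Longrightarrow> is_dag (reparent {} a B)"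
  unfolding is_dag_def by (rule acyclic_if_rank_increasing[of _ "\<lambda>x. if x = a then 1 else 0"])
    (auto simp: reparent_def)

lemma eta_empty: "eta {} = 0"
  by (simp add: eta_eq_sum_parent_vec pa_def parent_vec_def)

lemma eta_reparent_empty: "eta (reparent {} a B) = parent_vec a B"
proof -
  have "parent_vec w (pa (reparent {} a B) w) = (if w = a then parent_vec a B else 0)" for w
    unfolding pa_reparent by (simp add: pa_def parent_vec_def)
  then show ?thesis by (simp add: eta_eq_sum_parent_vec)
qed

lemma facet_of_C_N_one_imset_not_zero:
  fixes F :: "(real ^ ('n::finite set)) set"
  assumes facet: "F facet_of C_N" and one: "one_imset \<in> F"
  shows "0 \<notin> F"
proof
  assume "0 \<in> F"
  obtain ob :: "real ^ ('n \<times> 'n set)" and u where ob: "se_objective ob" "\<forall>v\<in>P_N. ob \<bullet> v \<le> u"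
      and F: "F = {c \<in> C_N. tau ob \<bullet> c = u}"
    using facet_of_C_N_se_face[OF facet] by blast
  define FP where "FP = {v \<in> P_N. ob \<bullet> v = u}"
  have FP_facet: "FP facet_of P_N"
    unfolding FP_def using se_facet_iff_facet_C_N_one_imset[OF ob] facet one F by simp
  have u0: "u = 0" using \<open>0 \<in> F\<close> F by simp
  have "is_dag {}" by (simp add: is_dag_def acyclic_def)
  then have empty: "is_dag {}" "eta {} \<in> FP"
    using eta_in_P_N[of "{}"] by (simp_all add: FP_def u0 eta_empty)
  have ob_Upsilon: "ob $ (a, B) = 0" if aB: "B \<noteq> {}" "a \<notin> B" for a B
  proof -
    obtain G where G: "is_dag G" "eta G \<in> FP" "pa G a = B"
      using se_facet_realizes_parent_set[OF ob FP_facet[unfolded FP_def] aB] unfolding FP_def by blast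
    have "is_dag (reparent G a (pa {} a))"
      using G(1) by (auto simp: is_dag_def reparent_def pa_def intro: acyclic_subset)
    then have "eta (reparent {} a (pa G a)) \<in> FP"
      using face_reparent_exchange[OF face_of_P_N_hyperplane[OF ob(2), folded FP_def] empty G(1,2)]
        is_dag_reparent_empty[OF aB(2)] G(3) by blast
    then show ?thesis
      using inner_parent_vec[OF se_objective_imp_Upsilon_space[OF ob(1)]]
      by (simp add: G(3) eta_reparent_empty FP_def u0)
  qed
  have "ob $ p = 0" for p
  proof (cases "in_Upsilon p")
    case True
    then show ?thesis using ob_Upsilon by (cases p) (auto simp: in_Upsilon_def)
  next
    case False
    then show ?thesis using ob(1) unfolding se_objective_def by blast
  qed
  then have "ob = 0" by (simp add: vec_eq_iff)
  then have "FP = P_N" by (simp add: FP_def u0)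
  then show False using FP_facet by simp
qed

theorem corollary6:
  assumes "CARD('n::finite) \<ge> 2"
  shows "(\<forall>(ob :: real ^ ('n \<times> 'n set)) (u :: real).
            se_objective ob \<and> (\<forall>v\<in>P_N. ob \<bullet> v \<le> u) \<longrightarrow>
            ({v \<in> P_N. ob \<bullet> v = u} facet_of P_N \<longleftrightarrow>
             ({c \<in> C_N. tau ob \<bullet> c = u} facet_of C_N \<and>
              one_imset \<in> {c \<in> C_N. tau ob \<bullet> c = u})))
       \<and> (\<forall>F. F facet_of (C_N :: (real ^ ('n set)) set) \<and> one_imset \<in> F \<longrightarrow>
            (\<exists>(ob :: real ^ ('n \<times> 'n set)) (u :: real).
               se_objective ob \<and> (\<forall>v\<in>P_N. ob \<bullet> v \<le> u) \<and>
               F = {c \<in> C_N. tau ob \<bullet> c = u}))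
       \<and> (\<forall>F. F facet_of (C_N :: (real ^ ('n set)) set) \<and> one_imset \<in> F \<longrightarrow> 0 \<notin> F)"
proof (intro conjI)
  show "\<forall>F. F facet_of C_N \<and> one_imset \<in> F \<longrightarrow> (\<exists>ob u. se_objective ob \<and> (\<forall>v\<in>P_N. ob \<bullet> v \<le> u)
      \<and> F = {c \<in> C_N. tau ob \<bullet> c = u})"
    using facet_of_C_N_se_face by blast
qed (use se_facet_iff_facet_C_N_one_imset facet_of_C_N_one_imset_not_zero in blast)+

end
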